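(* Every binary $t$-break-resilient code $\mathcal{C}\subseteq\{0,1\}^n$ satisfies $n-\log_2|\mathcal{C}|\ge \Omega\!\left(t\log \frac{n}{t}\right)$.
   Context: Breaking a binary string $\mathbf{x}\in\{0,1\}^n$ at $s\le t$ positions means choosing $s$ cut points between consecutive entries, producing $s+1$ consecutive substrings called fragments; fragments are oriented (read left to right as in $\mathbf{x}$) but given as an unordered multiset. A code $\mathcal{C}\subseteq\{0,1\}^n$ is a $t$-break-resilient code ($t$-BRC) if for any two distinct codewords $\mathbf{x},\mathbf{y}\in\mathcal{C}$, no choice of at most $t$ break positions in $\mathbf{x}$ and at most $t$ break positions in $\mathbf{y}$ yields the same multiset of fragments. The quantity $n-\log_2|\mathcal{C}|$ is the redundancy of $\mathcal{C}$; the $\Omega$ is asymptotic in $n$, with $t$ allowed to depend on $n$. *)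

theory Defs
  imports Complex_Main "HOL-Library.Multiset"
begin

text \<open>Breaking x at s cut points (between
consecutive entries) yields s+1 nonempty consecutive fragments, i.e. a list fs of
nonempty lists with concat fs = x; the result is the multiset of fragments.
Breaking at at most t positions means length fs \<le> t + 1.\<close>

definition fragment_multisets :: "nat \<Rightarrow> bool list \<Rightarrow> bool list multiset set" where
  "fragment_multisets t x =
     {mset fs | fs. concat fs = x \<and> [] \<notin> set fs \<and> length fs \<le> t + 1}"

definition is_BRC :: "nat \<Rightarrow> nat \<Rightarrow> bool list set \<Rightarrow> bool" where
  "is_BRC t n C \<longleftrightarrow>
     C \<subseteq> {x. length x = n} \<and>
     (\<forall>x\<in>C. \<forall>y\<in>C. x \<noteq> y \<longrightarrow> fragment_multisets t x \<inter> fragment_multisets t y = {})"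

end

theory Submission
  imports Defs
begin

text \<open>Cut every codeword into \<open>m \<approx> t/2\<close> blocks of length at least
\<open>L\<close>. If the blocks of two codewords are pairwise cyclic rotations of each other,
cutting every block once more at the rotation point breaks both words into the same multiset of at
most \<open>2m \<le> t + 1\<close> fragments. Hence a \<open>t\<close>-BRC contains at most one
codeword per sequence of necklaces (rotation classes) of the block lengths. A binary word of length
\<open>l\<close> without a rotation period \<open>\<le> l/2\<close> has \<open>l\<close> distinct
rotations, and there are only \<open>2^(l/2+1)\<close> words with such a period, so there are at
most \<open>2 * 2^l / l\<close> necklaces of length \<open>l\<close>. Therefore \<open>|C| (L/2)^m
\<le> 2^n\<close>, and choosing \<open>L \<approx> n/m\<close> gives redundancy at least \<open>m
log (L/2)\<close>, which is of order \<open>t log (n/t)\<close>.\<close>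

lemma finite_bool_lists_length: "finite {xs :: bool list. length xs = l}"
  using finite_lists_length_eq[of "UNIV :: bool set" l] by simp

lemma card_bool_lists_length: "card {xs :: bool list. length xs = l} = 2 ^ l"
  using card_lists_length_eq[of "UNIV :: bool set" l] by simp

definition rotations :: "'a list \<Rightarrow> 'a list set" where
  "rotations xs = range (\<lambda>k. rotate k xs)"

lemma rotate_mod_inverse: "rotate (length xs - k mod length xs) (rotate k xs) = xs"
proof (cases "xs = []")
  case False
  then have "k mod length xs < length xs" by simp
  then have "length xs - k mod length xs + k = length xs * Suc (k div length xs)"
    unfolding mult_Suc_right
    using minus_mod_eq_mult_div[of k "length xs"] mod_less_eq_dividend[of k "length xs"] by linarith
  then show ?thesis by (simp add: rotate_rotate)
qed simp

lemma rotations_rotate [simp]: "rotations (rotate k xs) = rotations xs"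
proof
  show "rotations (rotate k xs) \<subseteq> rotations xs"
    unfolding rotations_def by (metis image_subsetI rangeI rotate_rotate)
  have "rotate j xs = rotate (j + (length xs - k mod length xs)) (rotate k xs)" for j
    by (simp only: rotate_rotate[symmetric] rotate_mod_inverse)
  then show "rotations xs \<subseteq> rotations (rotate k xs)"
    unfolding rotations_def by (metis image_subsetI rangeI)
qed

lemma rotations_eq_if_mem:
  assumes "ys \<in> rotations xs"
  shows "rotations ys = rotations xs"
proof -
  obtain k where "ys = rotate k xs"
    using assms unfolding rotations_def by blast
  then show ?thesis by simp
qed

lemma self_mem_rotations [simp]: "xs \<in> rotations xs"
proof -
  have "xs = rotate 0 xs" by simp
  then show ?thesis unfolding rotations_def by blast
qed

lemma length_mem_rotations: "ys \<in> rotations xs \<Longrightarrow> length ys = length xs"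
  by (auto simp: rotations_def)

lemma finite_rotations: "finite (rotations xs)"
proof (rule finite_subset)
  show "rotations xs \<subseteq> {ys. set ys \<subseteq> set xs \<and> length ys = length xs}"
    by (auto simp: rotations_def)
qed (simp add: finite_lists_length_eq)

lemma mem_rotations_split: "ys \<in> rotations xs \<Longrightarrow> \<exists>u v. xs = u @ v \<and> ys = v @ u"
  unfolding rotations_def by (metis append_take_drop_id rangeE rotate_drop_take)

lemma rotate_diff_fixed:
  assumes "rotate i xs = rotate j xs" "i \<le> j" "i \<le> length xs"
  shows "rotate (j - i) xs = xs"
proof -
  have "xs = rotate (length xs - i + i) xs"
    using assms(3) by simp
  also have "\<dots> = rotate (length xs - i) (rotate j xs)"
    by (simp only: rotate_rotate[symmetric] assms(1))
  also have "length xs - i + j = j - i + length xs"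
    using assms(2,3) by simp
  then have "rotate (length xs - i) (rotate j xs) = rotate (j - i) (rotate (length xs) xs)"
    by (simp only: rotate_rotate)
  finally show ?thesis by simp
qed

lemma rotate_complement_fixed:
  assumes "rotate d xs = xs" "d \<le> length xs"
  shows "rotate (length xs - d) xs = xs"
proof -
  have "rotate (length xs - d) xs = rotate (length xs - d) (rotate d xs)"
    using assms(1) by simp
  also have "\<dots> = rotate (length xs) xs"
    using assms(2) by (simp add: rotate_rotate)
  finally show ?thesis by simp
qed

lemma nth_eq_nth_mod_if_rotate_fixed:
  assumes "rotate k xs = xs" "0 < k" "i < length xs"
  shows "xs ! i = xs ! (i mod k)"
  using assms(3)
proof (induction i rule: less_induct)
  case (less i)
  show ?case
  proof (cases "i < k")
    case False
    then have "i - k < length xs" "k + (i - k) = i"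
      using less.prems by simp_all
    then have "xs ! (i - k) = xs ! i"
      using nth_rotate[of "i - k" xs k] assms(1) less.prems by simp
    moreover have "xs ! (i - k) = xs ! ((i - k) mod k)"
      using less.IH \<open>i - k < length xs\<close> assms(2) False by simp
    ultimately show ?thesis
      using False by (simp add: le_mod_geq)
  qed simp
qed

definition has_short_period :: "'a list \<Rightarrow> bool" where
  "has_short_period xs \<longleftrightarrow> (\<exists>k. 0 < k \<and> 2 * k \<le> length xs \<and> rotate k xs = xs)"

lemma length_le_card_rotations:
  assumes "\<not> has_short_period xs"
  shows "length xs \<le> card (rotations xs)"
proof -
  have "inj_on (\<lambda>k. rotate k xs) {..<length xs}"
  proof (rule linorder_inj_onI')
    fix i j assume "i \<in> {..<length xs}" "j \<in> {..<length xs}" "i < j"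
    define d where "d = j - i"
    have d: "0 < d" "d < length xs"
      using \<open>i < j\<close> \<open>j \<in> {..<length xs}\<close> unfolding d_def by auto
    show "rotate i xs \<noteq> rotate j xs"
    proof
      assume "rotate i xs = rotate j xs"
      then have fixed: "rotate d xs = xs"
        using rotate_diff_fixed[of i xs j] \<open>i < j\<close> \<open>j \<in> {..<length xs}\<close>
        unfolding d_def by simp
      have fixed': "rotate (length xs - d) xs = xs"
        using rotate_complement_fixed[OF fixed] d(2) by simp
      show False
      proof (cases "2 * d \<le> length xs")
        case True
        then show False
          using assms fixed d(1) unfolding has_short_period_def by blast
      next
        case False
        then have "0 < length xs - d" "2 * (length xs - d) \<le> length xs"
          using d by auto
        then show False
          using assms fixed' unfolding has_short_period_def by blast
      qed
    qed
  qed
  then have "card ((\<lambda>k. rotate k xs) ` {..<length xs}) = length xs"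
    by (simp add: card_image)
  moreover have "(\<lambda>k. rotate k xs) ` {..<length xs} \<subseteq> rotations xs"
    by (auto simp: rotations_def)
  ultimately show ?thesis
    using card_mono[OF finite_rotations] by metis
qed

lemma card_rotate_fixed_le:
  assumes "0 < k"
  shows "card {xs :: bool list. length xs = l \<and> rotate k xs = xs} \<le> 2 ^ k"
    (is "card ?F \<le> _")
proof -
  have "inj_on (take k) ?F"
  proof (rule inj_onI)
    fix xs ys assume xs: "xs \<in> ?F" and ys: "ys \<in> ?F" and eq: "take k xs = take k ys"
    show "xs = ys"
    proof (rule nth_equalityI)
      fix i assume "i < length xs"
      moreover have "i mod k < k" "i mod k \<le> i"
        using assms by simp_all
      ultimately show "xs ! i = ys ! i"
        using xs ys assms nth_eq_nth_mod_if_rotate_fixed nth_take eq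
        by (metis (mono_tags, lifting) mem_Collect_eq le_less_trans)
    qed (use xs ys in simp)
  qed
  moreover have "take k ` ?F \<subseteq> {ys. length ys = min k l}"
    by auto
  ultimately have "card ?F \<le> card {ys :: bool list. length ys = min k l}"
    using card_inj_on_le finite_bool_lists_length by blast
  also have "\<dots> \<le> 2 ^ k"
    by (simp add: card_bool_lists_length)
  finally show ?thesis .
qed

lemma sum_pow2_atLeastAtMost_le: "(\<Sum>k = 1..a. (2::nat) ^ k) \<le> 2 ^ (a + 1)"
  by (induction a) auto

lemma card_short_period_le:
  "card {xs :: bool list. length xs = l \<and> has_short_period xs} \<le> 2 ^ (l div 2 + 1)"
proof -
  have "{xs :: bool list. length xs = l \<and> has_short_period xs}
      \<subseteq> (\<Union>k \<in> {1..l div 2}. {xs. length xs = l \<and> rotate k xs = xs})"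
  proof
    fix xs :: "bool list" assume "xs \<in> {xs. length xs = l \<and> has_short_period xs}"
    then obtain k where "length xs = l" "0 < k" "2 * k \<le> l" "rotate k xs = xs"
      unfolding has_short_period_def by auto
    moreover from this have "k \<in> {1..l div 2}"
      by simp
    ultimately show "xs \<in> (\<Union>k \<in> {1..l div 2}. {xs. length xs = l \<and> rotate k xs = xs})"
      by blast
  qed
  then have "card {xs :: bool list. length xs = l \<and> has_short_period xs}
      \<le> card (\<Union>k \<in> {1..l div 2}. {xs :: bool list. length xs = l \<and> rotate k xs = xs})"
    by (rule card_mono[rotated]) (auto intro: finite_subset[OF _ finite_bool_lists_length])
  also have "\<dots> \<le> (\<Sum>k = 1..l div 2. card {xs :: bool list. length xs = l \<and> rotate k xs = xs})"
    by (rule card_UN_le) simp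
  also have "\<dots> \<le> (\<Sum>k = 1..l div 2. 2 ^ k)"
    by (rule sum_mono) (simp add: card_rotate_fixed_le)
  also have "\<dots> \<le> 2 ^ (l div 2 + 1)"
    by (rule sum_pow2_atLeastAtMost_le)
  finally show ?thesis .
qed

definition necklaces :: "nat \<Rightarrow> bool list set set" where
  "necklaces l = rotations ` {xs. length xs = l}"

lemma card_necklaces_neq_0: "card (necklaces l) \<noteq> 0"
proof -
  have "finite (necklaces l)"
    unfolding necklaces_def using finite_bool_lists_length by simp
  moreover have "rotations (replicate l False) \<in> necklaces l"
    unfolding necklaces_def by simp
  ultimately show ?thesis by auto
qed

lemma card_aperiodic_necklaces_le:
  "l * card (rotations ` {xs :: bool list. length xs = l \<and> \<not> has_short_period xs}) \<le> 2 ^ l"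
    (is "l * card ?N \<le> _")
proof -
  have "pairwise disjnt ?N"
    by (auto simp: pairwise_def disjnt_def dest: rotations_eq_if_mem)
  moreover have "\<Union>?N \<subseteq> {xs. length xs = l}"
    by (auto dest: length_mem_rotations)
  ultimately have card_Union: "card (\<Union>?N) = (\<Sum>q\<in>?N. card q)"
    by (intro card_Union_disjoint) (auto simp: finite_rotations)
  have "l * card ?N = (\<Sum>q\<in>?N. l)"
    by simp
  also have "\<dots> \<le> (\<Sum>q\<in>?N. card q)"
    by (rule sum_mono) (auto dest: length_le_card_rotations)
  also have "\<dots> = card (\<Union>?N)"
    by (rule card_Union[symmetric])
  also have "\<dots> \<le> 2 ^ l"
    using card_mono[OF finite_bool_lists_length \<open>\<Union>?N \<subseteq> _\<close>] by (simp add: card_bool_lists_length)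
  finally show ?thesis .
qed

lemma four_mult_add_two_le_pow2: "8 \<le> a \<Longrightarrow> 4 * a + 2 \<le> (2::nat) ^ a"
proof (induction a rule: nat_induct_at_least)
  case (Suc a)
  have "(2::nat) ^ 2 \<le> 2 ^ a"
    using Suc.hyps by (intro power_increasing) auto
  with Suc.IH show ?case
    by simp
qed simp

lemma mult_pow2_half_le:
  assumes "16 \<le> l"
  shows "l * 2 ^ (l div 2 + 1) \<le> (2::nat) ^ l"
proof -
  define a where "a = l div 2"
  have "8 \<le> a" "l \<le> 2 * a + 1" "2 * a \<le> l"
    using assms unfolding a_def by auto
  have "l * 2 ^ (a + 1) \<le> (2 * a + 1) * 2 ^ (a + 1)"
    using \<open>l \<le> 2 * a + 1\<close> by (rule mult_le_mono1)
  also have "\<dots> = (4 * a + 2) * 2 ^ a"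
    by (simp add: algebra_simps)
  also have "\<dots> \<le> 2 ^ a * 2 ^ a"
    using four_mult_add_two_le_pow2[OF \<open>8 \<le> a\<close>] by (rule mult_le_mono1)
  also have "\<dots> \<le> 2 ^ l"
    using \<open>2 * a \<le> l\<close> by (simp flip: power_add mult_2)
  finally show ?thesis
    unfolding a_def .
qed

lemma card_necklaces_le:
  assumes "16 \<le> l"
  shows "l * card (necklaces l) \<le> 2 * 2 ^ l"
proof -
  let ?A = "{xs :: bool list. length xs = l \<and> \<not> has_short_period xs}"
  let ?P = "{xs :: bool list. length xs = l \<and> has_short_period xs}"
  have "necklaces l = rotations ` ?A \<union> rotations ` ?P"
    unfolding necklaces_def by auto
  then have "card (necklaces l) \<le> card (rotations ` ?A) + card (rotations ` ?P)"
    by (simp add: card_Un_le)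
  also have "card (rotations ` ?P) \<le> card ?P"
    by (rule card_image_le, rule finite_subset[of _ "{xs. length xs = l}"])
      (auto simp: finite_bool_lists_length)
  finally have "l * card (necklaces l) \<le> l * card (rotations ` ?A) + l * card ?P"
    by (simp flip: add_mult_distrib2)
  also have "\<dots> \<le> 2 ^ l + l * 2 ^ (l div 2 + 1)"
    using card_aperiodic_necklaces_le card_short_period_le by (intro add_mono mult_le_mono2)
  also have "\<dots> \<le> 2 * 2 ^ l"
    using mult_pow2_half_le[OF assms] by simp
  finally show ?thesis .
qed

lemma card_necklaces_mult_le:
  assumes "16 \<le> L" "L \<le> l"
  shows "real (card (necklaces l)) * (real L / 2) \<le> 2 ^ l"
proof -
  have "real (card (necklaces l)) * (real L / 2) \<le> real (card (necklaces l)) * (real l / 2)"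
    using assms(2) by (intro mult_left_mono) auto
  also have "\<dots> = real (l * card (necklaces l)) / 2"
    by simp
  also have "\<dots> \<le> 2 ^ l"
  proof -
    have "real (l * card (necklaces l)) \<le> real (2 * 2 ^ l)"
      using card_necklaces_le[of l] assms by (simp only: of_nat_le_iff)
    then show ?thesis
      by simp
  qed
  finally show ?thesis .
qed

lemma card_listset: "card (listset As) = prod_list (map card As)"
proof (induction As)
  case (Cons A As)
  have "listset (A # As) = (\<lambda>(x, xs). x # xs) ` (A \<times> listset As)"
    by (auto simp: set_Cons_def)
  moreover have "inj_on (\<lambda>(x, xs). x # xs) (A \<times> listset As)"
    by (auto intro: inj_onI)
  ultimately show ?case
    using Cons.IH by (simp add: card_image card_cartesian_product)
qed simp

lemma prod_list_card_necklaces_neq_0: "prod_list (map (\<lambda>l. card (necklaces l)) ls) \<noteq> 0"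
  by (auto simp: prod_list_zero_iff card_necklaces_neq_0)

lemma prod_card_necklaces_mult_le:
  assumes "16 \<le> L" "\<forall>l \<in> set ls. L \<le> l"
  shows "real (prod_list (map (\<lambda>l. card (necklaces l)) ls)) * (real L / 2) ^ length ls
    \<le> 2 ^ sum_list ls"
  using assms(2)
proof (induction ls)
  case (Cons l ls)
  have "real (prod_list (map (\<lambda>l. card (necklaces l)) (l # ls))) * (real L / 2) ^ length (l # ls)
      = (real (card (necklaces l)) * (real L / 2))
        * (real (prod_list (map (\<lambda>l. card (necklaces l)) ls)) * (real L / 2) ^ length ls)"
    by (simp add: algebra_simps)
  also have "\<dots> \<le> 2 ^ l * 2 ^ sum_list ls"
    using Cons card_necklaces_mult_le[OF assms(1)] by (intro mult_mono) auto
  finally show ?case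
    by (simp add: power_add)
qed simp

fun blocks :: "nat list \<Rightarrow> 'a list \<Rightarrow> 'a list list" where
  "blocks [] xs = []"
| "blocks (l # ls) xs = take l xs # blocks ls (drop l xs)"

lemma length_blocks [simp]: "length (blocks ls xs) = length ls"
  by (induction ls arbitrary: xs) auto

lemma concat_blocks: "length xs = sum_list ls \<Longrightarrow> concat (blocks ls xs) = xs"
  by (induction ls arbitrary: xs) auto

lemma rotations_blocks_mem_listset:
  "length xs = sum_list ls \<Longrightarrow> map rotations (blocks ls xs) \<in> listset (map necklaces ls)"
  by (induction ls arbitrary: xs) (auto simp: set_Cons_def necklaces_def)

lemma fragments_of_blockwise_rotations:
  assumes "list_all2 (\<lambda>u v. v \<in> rotations u) us vs"
  shows "\<exists>fs gs. concat fs = concat us \<and> concat gs = concat vs \<and> mset fs = mset gs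
           \<and> length fs = 2 * length us"
  using assms
proof induction
  case (Cons u us v vs)
  obtain fs gs where IH: "concat fs = concat us" "concat gs = concat vs" "mset fs = mset gs"
      "length fs = 2 * length us"
    using Cons.IH by blast
  obtain p s where "u = p @ s" "v = s @ p"
    using mem_rotations_split[OF Cons.hyps(1)] by blast
  with IH have "concat (p # s # fs) = concat (u # us)" "concat (s # p # gs) = concat (v # vs)"
      "mset (p # s # fs) = mset (s # p # gs)" "length (p # s # fs) = 2 * length (u # us)"
    by simp_all
  then show ?case by blast
qed (rule exI[of _ "[]"], simp)

lemma filter_nonempty_mem_fragment_multisets:
  assumes "concat fs = x" "length fs \<le> t + 1"
  shows "mset (filter (\<lambda>f. f \<noteq> []) fs) \<in> fragment_multisets t x"
proof -
  have "concat (filter (\<lambda>f. f \<noteq> []) fs) = x"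
    using assms(1) by (induction fs arbitrary: x) auto
  moreover have "length (filter (\<lambda>f. f \<noteq> []) fs) \<le> t + 1"
    using assms(2) length_filter_le order.trans by blast
  ultimately show ?thesis
    unfolding fragment_multisets_def by fastforce
qed

lemma length_mem_BRC: "is_BRC t n C \<Longrightarrow> x \<in> C \<Longrightarrow> length x = n"
  unfolding is_BRC_def by blast

lemma BRC_eq_if_common_fragments:
  assumes "is_BRC t n C" "x \<in> C" "y \<in> C"
    and "F \<in> fragment_multisets t x" "F \<in> fragment_multisets t y"
  shows "x = y"
  using assms unfolding is_BRC_def by blast

lemma inj_on_rotations_blocks_BRC:
  assumes "is_BRC t n C" "sum_list ls = n" "2 * length ls \<le> t + 1"
  shows "inj_on (\<lambda>x. map rotations (blocks ls x)) C"
proof (rule inj_onI)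
  fix x y
  assume x: "x \<in> C" and y: "y \<in> C"
    and eq: "map rotations (blocks ls x) = map rotations (blocks ls y)"
  have "list_all2 (=) (map rotations (blocks ls x)) (map rotations (blocks ls y))"
    using eq by (simp add: list.rel_eq)
  then have "list_all2 (\<lambda>u v. rotations u = rotations v) (blocks ls x) (blocks ls y)"
    by (simp add: list_all2_map1 list_all2_map2)
  then have "list_all2 (\<lambda>u v. v \<in> rotations u) (blocks ls x) (blocks ls y)"
    by (rule list_all2_mono) simp
  from fragments_of_blockwise_rotations[OF this] obtain fs gs
    where fs: "concat fs = concat (blocks ls x)" "concat gs = concat (blocks ls y)"
      "mset fs = mset gs" "length fs = 2 * length ls"
    by auto
  have "length x = sum_list ls" "length y = sum_list ls"
    using length_mem_BRC[OF assms(1)] x y assms(2) by simp_all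
  then have "concat fs = x" "concat gs = y"
    using fs(1,2) by (simp_all add: concat_blocks)
  moreover have "length fs \<le> t + 1" "length gs \<le> t + 1"
    using fs(3,4) assms(3) size_mset[of fs] size_mset[of gs] by simp_all
  ultimately have "mset (filter (\<lambda>f. f \<noteq> []) fs) \<in> fragment_multisets t x"
      "mset (filter (\<lambda>f. f \<noteq> []) gs) \<in> fragment_multisets t y"
    by (simp_all only: filter_nonempty_mem_fragment_multisets)
  moreover have "mset (filter (\<lambda>f. f \<noteq> []) fs) = mset (filter (\<lambda>f. f \<noteq> []) gs)"
    using fs(3) by (simp only: mset_filter)
  ultimately show "x = y"
    using BRC_eq_if_common_fragments[OF assms(1) x y] by metis
qed

lemma card_BRC_le_prod_card_necklaces:
  assumes "is_BRC t n C" "sum_list ls = n" "2 * length ls \<le> t + 1"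
  shows "card C \<le> prod_list (map (\<lambda>l. card (necklaces l)) ls)"
proof -
  have card_eq: "card (listset (map necklaces ls)) = prod_list (map (\<lambda>l. card (necklaces l)) ls)"
    by (simp add: card_listset comp_def)
  then have "finite (listset (map necklaces ls))"
    using prod_list_card_necklaces_neq_0 card.infinite by metis
  moreover have "(\<lambda>x. map rotations (blocks ls x)) ` C \<subseteq> listset (map necklaces ls)"
    using length_mem_BRC[OF assms(1)] assms(2) by (intro image_subsetI rotations_blocks_mem_listset) simp
  ultimately have "card C \<le> card (listset (map necklaces ls))"
    using card_inj_on_le[OF inj_on_rotations_blocks_BRC[OF assms]] by blast
  then show ?thesis
    by (simp only: card_eq)
qed

lemma BRC_redundancy_ge:
  assumes "is_BRC t n C" "1 \<le> m" "16 \<le> L" "m * L \<le> n" "2 * m \<le> t + 1"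
  shows "real m * log 2 (real L / 2) \<le> real n - log 2 (real (card C))"
proof -
  define ls where "ls = replicate (m - 1) L @ [n - (m - 1) * L]"
  have "m * L = (m - 1) * L + L"
    using assms(2) by (cases m) auto
  then have ls: "sum_list ls = n" "length ls = m" "\<forall>l \<in> set ls. L \<le> l"
    using assms(2,4) unfolding ls_def by (simp_all add: sum_list_replicate)
  define P where "P = prod_list (map (\<lambda>l. card (necklaces l)) ls)"
  have "card C \<le> P"
    unfolding P_def using card_BRC_le_prod_card_necklaces[OF assms(1) ls(1)] ls(2) assms(5) by simp
  have "0 < P"
    unfolding P_def using prod_list_card_necklaces_neq_0 by simp
  have "real P * (real L / 2) ^ m \<le> 2 ^ n"
    unfolding P_def using prod_card_necklaces_mult_le[OF assms(3) ls(3)] ls(1,2) by simp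
  then have "log 2 (real P * (real L / 2) ^ m) \<le> log 2 (2 ^ n)"
    using \<open>0 < P\<close> assms(3) by (intro log_mono) simp_all
  then have "log 2 (real P) + real m * log 2 (real L / 2) \<le> n"
    using \<open>0 < P\<close> assms(3) by (simp add: log_mult_pos log_nat_power)
  moreover have "log 2 (real (card C)) \<le> log 2 (real P)"
  proof (cases "card C = 0")
    case True
    then show ?thesis
      using \<open>0 < P\<close> by (simp add: log_def)
  qed (use \<open>card C \<le> P\<close> in simp)
  ultimately show ?thesis
    by linarith
qed

lemma BRC_redundancy_ge_linear:
  assumes "is_BRC t n C" "1 \<le> t" "t \<le> n" "32 \<le> n"
  shows "3 / 32 * real t \<le> real n - log 2 (real (card C))"
proof -
  define m where "m = min ((t + 1) div 2) (n div 16)"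
  have "(t + 1) div 2 * 2 + (t + 1) mod 2 = t + 1" "(t + 1) mod 2 < 2"
      "n div 16 * 16 + n mod 16 = n" "n mod 16 < 16"
    by simp_all
  then have "1 \<le> (t + 1) div 2" "2 * ((t + 1) div 2) \<le> t + 1" "t \<le> 32 * ((t + 1) div 2)"
      "1 \<le> n div 16" "n div 16 * 16 \<le> n" "t \<le> 32 * (n div 16)"
    using assms(2-4) by linarith+
  then have m: "1 \<le> m" "m * 16 \<le> n" "2 * m \<le> t + 1" "t \<le> 32 * m"
    unfolding m_def by (auto simp: min_def)
  have "log 2 (real 16 / 2) = 3"
    using log_pow_cancel[of 2 3] by simp
  then have "3 * real m \<le> real n - log 2 (real (card C))"
    using BRC_redundancy_ge[OF assms(1) m(1) _ m(2,3)] by simp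
  moreover have "3 / 32 * real t \<le> 3 * real m"
    using m(4) by simp
  ultimately show ?thesis
    by linarith
qed

lemma BRC_redundancy_ge_log:
  assumes "is_BRC t n C" "1 \<le> t" "32 * t \<le> n"
  shows "real t / 2 * (log 2 (real n / real t) - 2) \<le> real n - log 2 (real (card C))"
proof -
  define m where "m = (t + 1) div 2"
  define L where "L = n div m"
  have m: "1 \<le> m" "m \<le> t" "2 * m \<le> t + 1" "t \<le> 2 * m"
    using assms(2) unfolding m_def by auto
  have "m * L \<le> n"
    unfolding L_def by (simp add: mult.commute)
  have "32 * m \<le> n"
    using assms(3) m(2) by linarith
  then have "32 \<le> L"
    unfolding L_def using m(1) by (simp add: less_eq_div_iff_mult_less_eq mult.commute)
  have "n mod m < m" "m \<le> m * L"
    using m(1) \<open>32 \<le> L\<close> by simp_all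
  have "n = m * L + n mod m"
    unfolding L_def by simp
  also have "\<dots> \<le> m * L + m * L"
    using \<open>n mod m < m\<close> \<open>m \<le> m * L\<close> by linarith
  also have "\<dots> \<le> 2 * (t * L)"
    using mult_le_mono1[OF m(2), of L] by linarith
  finally have "real n \<le> real (2 * (t * L))"
    by (simp only: of_nat_le_iff)
  then have "1 \<le> real n / (4 * real t)" "real n / (4 * real t) \<le> real L / 2"
    using assms(2,3) by (simp_all add: field_simps)
  then have y: "0 \<le> log 2 (real n / (4 * real t))"
      "log 2 (real n / (4 * real t)) \<le> log 2 (real L / 2)"
    by simp_all
  have log_eq: "log 2 (real n / real t) - 2 = log 2 (real n / (4 * real t))"
    using assms(2,3) log_pow_cancel[of 2 2] by (simp add: log_divide_pos log_mult_pos)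
  have "real t / 2 * log 2 (real n / (4 * real t)) \<le> real m * log 2 (real n / (4 * real t))"
    using m(4) y(1) by (intro mult_right_mono) simp_all
  also have "\<dots> \<le> real m * log 2 (real L / 2)"
    using y(2) by (intro mult_left_mono) simp_all
  also have "\<dots> \<le> real n - log 2 (real (card C))"
    using BRC_redundancy_ge[OF assms(1) m(1) _ \<open>m * L \<le> n\<close> m(3)] \<open>32 \<le> L\<close> by simp
  finally show ?thesis
    unfolding log_eq .
qed

lemma BRC_redundancy_ge_t_log:
  assumes C: "is_BRC t n C" and "1 \<le> t" "32 \<le> n"
  shows "1 / 100 * real t * log 2 (real n / real t) \<le> real n - log 2 (real (card C))"
proof -
  let ?y = "log 2 (real n / real t)" and ?R = "real n - log 2 (real (card C))"
  have log2_32: "log 2 32 = (5 :: real)"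
    using log_pow_cancel[of 2 5] by simp
  consider "n \<le> t" | "t \<le> n" "n < 32 * t" | "32 * t \<le> n"
    by linarith
  then show ?thesis
  proof cases
    case 1
    then have "1 / 100 * real t * ?y \<le> 0"
      using \<open>1 \<le> t\<close> \<open>32 \<le> n\<close> by (intro mult_nonneg_nonpos) simp_all
    moreover have "log 2 8 \<le> ?R"
      using BRC_redundancy_ge[OF C, of 1 16] \<open>32 \<le> n\<close> \<open>1 \<le> t\<close> by simp
    moreover have "0 \<le> log 2 (8 :: real)"
      by simp
    ultimately show ?thesis
      by linarith
  next
    case 2
    then have "?y \<le> 5"
      using \<open>1 \<le> t\<close> by (simp add: divide_le_eq flip: log2_32)
    then have "1 / 100 * real t * ?y \<le> 1 / 100 * real t * 5"
      by (intro mult_left_mono) auto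
    then show ?thesis
      using BRC_redundancy_ge_linear[OF C \<open>1 \<le> t\<close> 2(1) \<open>32 \<le> n\<close>] by linarith
  next
    case 3
    then have "5 \<le> ?y"
      using \<open>1 \<le> t\<close> by (simp add: le_divide_eq flip: log2_32)
    then have "real t * (1 / 100 * ?y) \<le> real t * (1 / 2 * (?y - 2))"
      by (intro mult_left_mono) auto
    then show ?thesis
      using BRC_redundancy_ge_log[OF C \<open>1 \<le> t\<close> 3] by (simp add: algebra_simps)
  qed
qed

theorem theorem1:
  shows "\<exists>c::real. c > 0 \<and> (\<exists>N::nat. \<forall>n\<ge>N. \<forall>t::nat. t \<ge> 1 \<longrightarrow>
           (\<forall>C. is_BRC t n C \<longrightarrow>
              real n - log 2 (real (card C)) \<ge> c * real t * log 2 (real n / real t)))"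
  using BRC_redundancy_ge_t_log by (intro exI[of _ "1 / 100"] conjI exI[of _ 32] allI impI) auto

end
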